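(* Let $K$ be a field, $1 \le d \le n$, $N \ge n+d$, and let $I = (S_N.\,e_n^d(x_1,\dots,x_n)) \subseteq K[x_1,\dots,x_N]$. If $\mathrm{char}(K) \nmid \binom{n}{d}$, then $$\sqrt{I} = (S_N.\,x_1\cdots x_d).$$ Moreover, if $\mathrm{char}(K) \mid \binom{n}{d}$, then for any $N \ge n$ the ideal $\sqrt{(S_N.\,e_n^d(x_1,\dots,x_n))}\subseteq K[x_1,\dots,x_N]$ contains no monomial.
   Context: $e_n^d(x_1,\dots,x_n)$ denotes the elementary symmetric polynomial of degree $d$ in $x_1,\dots,x_n$. $S_N$ acts on $K[x_1,\dots,x_N]$ by permuting variables; $(S_N.g)$ denotes the ideal generated by the $S_N$-orbit of $g$. *)

theory Defs
  imports "HOL-Library.Poly_Mapping" "HOL-Combinatorics.Permutations"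
begin

text \<open>Multivariate polynomials over 'a in variables x_i (i :: nat):
  a polynomial maps exponent vectors (monomials) to coefficients.\<close>
type_synonym 'a mpoly = "(nat \<Rightarrow>\<^sub>0 nat) \<Rightarrow>\<^sub>0 'a"

definition mconst :: "'a::comm_ring_1 \<Rightarrow> 'a mpoly" where
  "mconst c = Poly_Mapping.single 0 c"

definition mvar :: "nat \<Rightarrow> ('a::comm_ring_1) mpoly" where
  "mvar i = Poly_Mapping.single (Poly_Mapping.single i 1) 1"

definition mmonom :: "(nat \<Rightarrow>\<^sub>0 nat) \<Rightarrow> ('a::comm_ring_1) mpoly" where
  "mmonom \<alpha> = Poly_Mapping.single \<alpha> 1"

definition poly_ring :: "nat \<Rightarrow> ('a::comm_ring_1) mpoly set" where
  "poly_ring N = {p :: 'a mpoly. \<forall>m \<in> Poly_Mapping.keys p. Poly_Mapping.keys (m::nat \<Rightarrow>\<^sub>0 nat) \<subseteq> {1..N}}"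

definition perm_mpoly :: "(nat \<Rightarrow> nat) \<Rightarrow> ('a::comm_ring_1) mpoly \<Rightarrow> 'a mpoly" where
  "perm_mpoly \<sigma> p =
     (\<Sum>m \<in> Poly_Mapping.keys p. mconst (Poly_Mapping.lookup p m) * (\<Prod>i \<in> Poly_Mapping.keys m. mvar (\<sigma> i) ^ Poly_Mapping.lookup m i))"

definition orbit_SN :: "nat \<Rightarrow> ('a::comm_ring_1) mpoly \<Rightarrow> 'a mpoly set" where
  "orbit_SN N g = {perm_mpoly \<sigma> g | \<sigma>. \<sigma> permutes {1..N}}"

definition ideal_gen :: "nat \<Rightarrow> ('a::comm_ring_1) mpoly set \<Rightarrow> 'a mpoly set" where
  "ideal_gen N G = {\<Sum>g \<in> F. c g * g | F c. finite F \<and> F \<subseteq> G \<and> (\<forall>g \<in> F. c g \<in> poly_ring N)}"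

definition radical :: "nat \<Rightarrow> ('a::comm_ring_1) mpoly set \<Rightarrow> 'a mpoly set" where
  "radical N I = {f \<in> poly_ring N. \<exists>k::nat. f ^ k \<in> I}"

definition elem_sym :: "nat \<Rightarrow> nat \<Rightarrow> ('a::comm_ring_1) mpoly" where
  "elem_sym n d = (\<Sum>S \<in> {S. S \<subseteq> {1..n} \<and> card S = d}. \<Prod>i \<in> S. mvar i)"

end

theory Submission
  imports Defs
begin

text \<open>
  Write I for the ideal generated by the S_N-orbit of e_n^d and J for the one generated by the
  squarefree monomials of degree d. Each translate of e_n^d is a sum of such monomials, so
  I \<subseteq> J; and J is radical, because if a monomial of f has support B with |B| < d, setting
  the variables outside B to zero kills J but not f^k.

  Conversely, if no power of x_B (|B| = d) lies in I, choose a prime P \<supseteq> I avoiding x_B.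
  Modulo P the values a_i = x_i satisfy e_d(a_T) = 0 for all n-sets T. When a_u \<noteq> a_v, the
  identity e_(t+1)(T+u) - e_(t+1)(T+v) = (a_u - a_v) e_t(T) pushes the vanishing down one degree
  on sets avoiding u and v; when all a_u agree, e_t(T) = C(|T|,t) a^t and Pascal's rule would
  force C(n,d) \<in> P. So at most 2(d-1) of the a_i are nonzero, and since N \<ge> n + d, B together
  with n - d indices of zeros is an n-set T with e_d(a_T) = \<Prod>_(i\<in>B) a_i \<noteq> 0.

  If char K divides C(n,d), evaluating every variable at 1 kills each generator of I but sends
  every monomial to 1.
\<close>

definition mon_eval :: "(nat \<Rightarrow> 'b::comm_ring_1) \<Rightarrow> (nat \<Rightarrow>\<^sub>0 nat) \<Rightarrow> 'b" where
  "mon_eval f m = (\<Prod>i \<in> Poly_Mapping.keys m. f i ^ Poly_Mapping.lookup m i)"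

definition meval :: "(nat \<Rightarrow> 'b::comm_ring_1) \<Rightarrow> ('a::comm_ring_1 \<Rightarrow> 'b) \<Rightarrow> 'a mpoly \<Rightarrow> 'b" where
  "meval f h p = (\<Sum>m \<in> Poly_Mapping.keys p. h (Poly_Mapping.lookup p m) * mon_eval f m)"

lemma mon_eval_superset:
  assumes "finite K" "Poly_Mapping.keys m \<subseteq> K"
  shows "mon_eval f m = (\<Prod>i \<in> K. f i ^ Poly_Mapping.lookup m i)"
  unfolding mon_eval_def
  by (rule prod.mono_neutral_left) (use assms in \<open>auto simp: in_keys_iff\<close>)

lemma mon_eval_zero [simp]: "mon_eval f 0 = 1"
  by (simp add: mon_eval_def)

lemma mon_eval_add: "mon_eval f (a + b) = mon_eval f a * mon_eval f b"
proof -
  let ?K = "Poly_Mapping.keys a \<union> Poly_Mapping.keys b"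
  have "mon_eval f (a + b) = (\<Prod>i \<in> ?K. f i ^ Poly_Mapping.lookup (a + b) i)"
    by (rule mon_eval_superset) (use keys_add[of a b] in auto)
  also have "\<dots> = (\<Prod>i \<in> ?K. f i ^ Poly_Mapping.lookup a i) * (\<Prod>i \<in> ?K. f i ^ Poly_Mapping.lookup b i)"
    by (simp add: lookup_add power_add prod.distrib)
  also have "\<dots> = mon_eval f a * mon_eval f b"
    by (simp add: mon_eval_superset[symmetric])
  finally show ?thesis .
qed

lemma mon_eval_cong:
  "(\<And>i. i \<in> Poly_Mapping.keys m \<Longrightarrow> f i = g i) \<Longrightarrow> mon_eval f m = mon_eval g m"
  by (simp add: mon_eval_def)

lemma poly_mapping_sum_single:
  "p = (\<Sum>m \<in> Poly_Mapping.keys p. Poly_Mapping.single m (Poly_Mapping.lookup p m))"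
  by (rule poly_mapping_eqI) (auto simp: lookup_sum lookup_single when_def in_keys_iff)

locale ring_hom =
  fixes h :: "'a::comm_ring_1 \<Rightarrow> 'b::comm_ring_1"
  assumes hom_add: "h (x + y) = h x + h y"
    and hom_mult: "h (x * y) = h x * h y"
    and hom_one: "h 1 = 1"
begin

lemma hom_zero [simp]: "h 0 = 0"
  using hom_add[of 0 0] by simp

lemma meval_superset:
  assumes "finite K" "Poly_Mapping.keys p \<subseteq> K"
  shows "meval f h p = (\<Sum>m \<in> K. h (Poly_Mapping.lookup p m) * mon_eval f m)"
  unfolding meval_def
  by (rule sum.mono_neutral_left) (use assms in \<open>auto simp: in_keys_iff\<close>)

lemma meval_zero [simp]: "meval f h 0 = 0"
  by (simp add: meval_def)

lemma meval_add: "meval f h (p + q) = meval f h p + meval f h q"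
proof -
  let ?K = "Poly_Mapping.keys p \<union> Poly_Mapping.keys q"
  have "meval f h (p + q) = (\<Sum>m \<in> ?K. h (Poly_Mapping.lookup (p + q) m) * mon_eval f m)"
    by (rule meval_superset) (use keys_add[of p q] in auto)
  also have "\<dots> = (\<Sum>m \<in> ?K. h (Poly_Mapping.lookup p m) * mon_eval f m)
                 + (\<Sum>m \<in> ?K. h (Poly_Mapping.lookup q m) * mon_eval f m)"
    by (simp add: lookup_add hom_add distrib_right sum.distrib)
  also have "\<dots> = meval f h p + meval f h q"
    by (simp add: meval_superset[symmetric])
  finally show ?thesis .
qed

lemma meval_sum: "meval f h (\<Sum>x\<in>A. g x) = (\<Sum>x\<in>A. meval f h (g x))"
  by (induction A rule: infinite_finite_induct) (auto simp: meval_add)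

lemma meval_single [simp]: "meval f h (Poly_Mapping.single a c) = h c * mon_eval f a"
  by (cases "c = 0") (auto simp: meval_def)

lemma meval_mult: "meval f h (p * q) = meval f h p * meval f h q"
proof -
  have "p * q = (\<Sum>m \<in> Poly_Mapping.keys p. Poly_Mapping.single m (Poly_Mapping.lookup p m)) *
                (\<Sum>m' \<in> Poly_Mapping.keys q. Poly_Mapping.single m' (Poly_Mapping.lookup q m'))"
    by (simp flip: poly_mapping_sum_single)
  also have "\<dots> = (\<Sum>m \<in> Poly_Mapping.keys p. \<Sum>m' \<in> Poly_Mapping.keys q.
      Poly_Mapping.single (m + m') (Poly_Mapping.lookup p m * Poly_Mapping.lookup q m'))"
    by (simp add: sum_product mult_single)
  finally have "meval f h (p * q) = (\<Sum>m \<in> Poly_Mapping.keys p. \<Sum>m' \<in> Poly_Mapping.keys q.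
      (h (Poly_Mapping.lookup p m) * mon_eval f m) * (h (Poly_Mapping.lookup q m') * mon_eval f m'))"
    by (simp add: meval_sum hom_mult mon_eval_add mult_ac)
  also have "\<dots> = meval f h p * meval f h q"
    by (simp add: meval_def sum_product)
  finally show ?thesis .
qed

lemma meval_one [simp]: "meval f h 1 = 1"
  using meval_single[of f 0 1] by (simp add: hom_one)

lemma meval_prod: "meval f h (\<Prod>x\<in>A. g x) = (\<Prod>x\<in>A. meval f h (g x))"
  by (induction A rule: infinite_finite_induct) (auto simp: meval_mult)

lemma meval_power: "meval f h (p ^ k) = meval f h p ^ k"
  by (induction k) (auto simp: meval_mult)

lemma meval_mvar [simp]: "meval f h (mvar i) = f i"
  by (simp add: mvar_def mon_eval_def hom_one)

end

interpretation coeff_id: ring_hom "id :: 'a::comm_ring_1 \<Rightarrow> 'a"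
  by unfold_locales auto

interpretation mconst: ring_hom mconst
  by unfold_locales (simp_all add: mconst_def single_add mult_single)

lemma perm_mpoly_eq_meval: "perm_mpoly \<sigma> p = meval (\<lambda>i. mvar (\<sigma> i)) mconst p"
  by (simp add: perm_mpoly_def meval_def mon_eval_def)


section \<open>Setting variables to zero\<close>

lemma prod_single_one:
  "(\<Prod>i\<in>K. Poly_Mapping.single (g i) (1::'a::comm_ring_1)) = Poly_Mapping.single (\<Sum>i\<in>K. g i) 1"
  by (induction K rule: infinite_finite_induct) (auto simp: mult_single)

lemma mon_eval_mvar: "mon_eval mvar m = (Poly_Mapping.single m 1 :: 'a::comm_ring_1 mpoly)"
proof -
  have "mvar i ^ e = (Poly_Mapping.single (Poly_Mapping.single i e) 1 :: 'a mpoly)" for i e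
    by (induction e) (simp_all add: mvar_def mult_single single_add[symmetric])
  then have "mon_eval mvar m = (\<Prod>i\<in>Poly_Mapping.keys m.
      Poly_Mapping.single (Poly_Mapping.single i (Poly_Mapping.lookup m i)) (1::'a))"
    by (simp add: mon_eval_def)
  also have "\<dots> = Poly_Mapping.single m 1"
    by (simp add: prod_single_one flip: poly_mapping_sum_single)
  finally show ?thesis .
qed

lemma mon_eval_restrict:
  "mon_eval (\<lambda>i. if i \<in> B then mvar i else 0) m
     = (if Poly_Mapping.keys m \<subseteq> B then Poly_Mapping.single m 1 else (0::'a::comm_ring_1 mpoly))"
proof (cases "Poly_Mapping.keys m \<subseteq> B")
  case True
  then have "mon_eval (\<lambda>i. if i \<in> B then mvar i else 0) m = mon_eval mvar m"
    by (intro mon_eval_cong) auto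
  with True show ?thesis by (simp add: mon_eval_mvar)
next
  case False
  then obtain i where i: "i \<in> Poly_Mapping.keys m" "i \<notin> B" by auto
  then have "(if i \<in> B then mvar i else 0) ^ Poly_Mapping.lookup m i = (0::'a mpoly)"
    by (simp add: in_keys_iff power_0_left)
  then show ?thesis using False i unfolding mon_eval_def
    by (metis (no_types, lifting) finite_keys prod_zero)
qed

definition restrict_vars :: "nat set \<Rightarrow> 'a::comm_ring_1 mpoly \<Rightarrow> 'a mpoly" where
  "restrict_vars B = meval (\<lambda>i. if i \<in> B then mvar i else 0) mconst"

lemma lookup_restrict_vars:
  "Poly_Mapping.lookup (restrict_vars B p) m
     = (if Poly_Mapping.keys m \<subseteq> B then Poly_Mapping.lookup p m else 0)"
proof -
  have "restrict_vars B p = (\<Sum>m' \<in> Poly_Mapping.keys p.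
      if Poly_Mapping.keys m' \<subseteq> B then Poly_Mapping.single m' (Poly_Mapping.lookup p m') else 0)"
    by (auto simp: restrict_vars_def meval_def mon_eval_restrict mconst_def mult_single
        intro!: sum.cong)
  also have "\<dots> = (\<Sum>m' \<in> {m' \<in> Poly_Mapping.keys p. Poly_Mapping.keys m' \<subseteq> B}.
      Poly_Mapping.single m' (Poly_Mapping.lookup p m'))"
    by (simp add: sum.inter_filter)
  finally have "Poly_Mapping.lookup (restrict_vars B p) m
      = (\<Sum>m' \<in> {m' \<in> Poly_Mapping.keys p. Poly_Mapping.keys m' \<subseteq> B}.
           if m' = m then Poly_Mapping.lookup p m' else 0)"
    by (simp add: lookup_sum lookup_single when_def)
  then show ?thesis
    by (simp add: sum.delta) (auto simp: in_keys_iff)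
qed

lemma keys_restrict_vars: "m \<in> Poly_Mapping.keys (restrict_vars B p) \<Longrightarrow> Poly_Mapping.keys m \<subseteq> B"
  by (simp add: in_keys_iff[of m] lookup_restrict_vars split: if_splits)

lemma restrict_vars_zero: "restrict_vars B 0 = 0"
  by (simp add: restrict_vars_def)

lemma restrict_vars_add: "restrict_vars B (p + q) = restrict_vars B p + restrict_vars B q"
  unfolding restrict_vars_def by (rule mconst.meval_add)

lemma restrict_vars_mult: "restrict_vars B (p * q) = restrict_vars B p * restrict_vars B q"
  unfolding restrict_vars_def by (rule mconst.meval_mult)

lemma restrict_vars_power: "restrict_vars B (p ^ k) = restrict_vars B p ^ k"
  unfolding restrict_vars_def by (rule mconst.meval_power)

lemma restrict_vars_sum: "restrict_vars B (\<Sum>x\<in>A. g x) = (\<Sum>x\<in>A. restrict_vars B (g x))"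
  unfolding restrict_vars_def by (rule mconst.meval_sum)

lemma restrict_vars_prod_mvar:
  "restrict_vars B (\<Prod>i\<in>A. mvar i) = (\<Prod>i\<in>A. if i \<in> B then mvar i else 0)"
  unfolding restrict_vars_def by (simp add: mconst.meval_prod)


lemma restrict_vars_in_poly_ring: "restrict_vars {1..N} p \<in> poly_ring N"
  unfolding poly_ring_def using keys_restrict_vars by blast

lemma poly_ring_iff_restrict_vars: "p \<in> poly_ring N \<longleftrightarrow> restrict_vars {1..N} p = p"
proof
  assume "p \<in> poly_ring N"
  then show "restrict_vars {1..N} p = p"
    by (intro poly_mapping_eqI) (auto simp: lookup_restrict_vars poly_ring_def in_keys_iff)
qed (metis restrict_vars_in_poly_ring)

lemma poly_ring_add: "p \<in> poly_ring N \<Longrightarrow> q \<in> poly_ring N \<Longrightarrow> p + q \<in> poly_ring N"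
  by (simp add: poly_ring_iff_restrict_vars restrict_vars_add)

lemma poly_ring_mult: "p \<in> poly_ring N \<Longrightarrow> q \<in> poly_ring N \<Longrightarrow> p * q \<in> poly_ring N"
  by (simp add: poly_ring_iff_restrict_vars restrict_vars_mult)

lemma poly_ring_zero [simp]: "0 \<in> poly_ring N"
  by (simp add: poly_ring_def)

lemma poly_ring_one [simp]: "1 \<in> poly_ring N"
  by (simp add: poly_ring_def)

lemma poly_ring_mvar: "i \<in> {1..N} \<Longrightarrow> mvar i \<in> poly_ring N"
  by (simp add: poly_ring_def mvar_def)

lemma poly_ring_sum: "(\<And>x. x \<in> A \<Longrightarrow> g x \<in> poly_ring N) \<Longrightarrow> (\<Sum>x\<in>A. g x) \<in> poly_ring N"
  by (induction A rule: infinite_finite_induct) (auto intro: poly_ring_add)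

lemma poly_ring_prod: "(\<And>x. x \<in> A \<Longrightarrow> g x \<in> poly_ring N) \<Longrightarrow> (\<Prod>x\<in>A. g x) \<in> poly_ring N"
  by (induction A rule: infinite_finite_induct) (auto intro: poly_ring_mult)

lemma poly_ring_power: "p \<in> poly_ring N \<Longrightarrow> p ^ k \<in> poly_ring N"
  by (induction k) (auto intro: poly_ring_mult)

lemma poly_ring_of_nat [simp]: "of_nat k \<in> poly_ring N"
  by (induction k) (auto intro: poly_ring_add)

lemma poly_ring_prod_mvar: "B \<subseteq> {1..N} \<Longrightarrow> (\<Prod>i\<in>B. mvar i) \<in> poly_ring N"
  by (intro poly_ring_prod poly_ring_mvar) auto

lemma ideal_gen_zero [simp]: "0 \<in> ideal_gen N G"
  unfolding ideal_gen_def by (rule CollectI, rule exI[of _ "{}"]) auto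

lemma ideal_gen_generator: "g \<in> G \<Longrightarrow> g \<in> ideal_gen N G"
  unfolding ideal_gen_def
  by (rule CollectI, rule exI[of _ "{g}"], rule exI[of _ "\<lambda>_. 1"]) auto

lemma ideal_gen_add:
  assumes "a \<in> ideal_gen N G" "b \<in> ideal_gen N G"
  shows "a + b \<in> ideal_gen N G"
proof -
  obtain F1 c1 where 1: "a = (\<Sum>g\<in>F1. c1 g * g)" "finite F1" "F1 \<subseteq> G" "\<forall>g\<in>F1. c1 g \<in> poly_ring N"
    using assms(1) unfolding ideal_gen_def by blast
  obtain F2 c2 where 2: "b = (\<Sum>g\<in>F2. c2 g * g)" "finite F2" "F2 \<subseteq> G" "\<forall>g\<in>F2. c2 g \<in> poly_ring N"
    using assms(2) unfolding ideal_gen_def by blast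
  define c where "c g = (if g \<in> F1 then c1 g else 0) + (if g \<in> F2 then c2 g else 0)" for g
  have "(\<Sum>g\<in>F1 \<union> F2. c g * g) = (\<Sum>g\<in>F1 \<union> F2. if g \<in> F1 then c1 g * g else 0)
                                 + (\<Sum>g\<in>F1 \<union> F2. if g \<in> F2 then c2 g * g else 0)"
  proof -
    have "c g * g = (if g \<in> F1 then c1 g * g else 0) + (if g \<in> F2 then c2 g * g else 0)" for g
      by (simp add: c_def distrib_right)
    then show ?thesis by (simp add: sum.distrib)
  qed
  also have "\<dots> = a + b"
    using 1 2 by (simp add: sum.If_cases Int_absorb1 Int_absorb2)
  finally have "a + b = (\<Sum>g\<in>F1 \<union> F2. c g * g)" by simp
  moreover have "\<forall>g\<in>F1 \<union> F2. c g \<in> poly_ring N"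
    using 1 2 by (auto simp: c_def intro!: poly_ring_add)
  ultimately show ?thesis unfolding ideal_gen_def using 1 2 by blast
qed

lemma ideal_gen_mult:
  assumes "r \<in> poly_ring N" "a \<in> ideal_gen N G"
  shows "r * a \<in> ideal_gen N G"
proof -
  obtain F c where 1: "a = (\<Sum>g\<in>F. c g * g)" "finite F" "F \<subseteq> G" "\<forall>g\<in>F. c g \<in> poly_ring N"
    using assms(2) unfolding ideal_gen_def by blast
  have "r * a = (\<Sum>g\<in>F. (r * c g) * g)"
    using 1 by (simp add: sum_distrib_left mult_ac)
  moreover have "\<forall>g\<in>F. r * c g \<in> poly_ring N"
    using 1 assms(1) by (auto intro: poly_ring_mult)
  ultimately show ?thesis
    unfolding ideal_gen_def mem_Collect_eq
    by (intro exI[of _ F] exI[of _ "\<lambda>g. r * c g"]) (use 1 in auto)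
qed

lemma ideal_gen_sum:
  "(\<And>x. x \<in> A \<Longrightarrow> g x \<in> ideal_gen N G) \<Longrightarrow> (\<Sum>x\<in>A. g x) \<in> ideal_gen N G"
  by (induction A rule: infinite_finite_induct) (auto intro: ideal_gen_add)

lemma ideal_gen_least: "G \<subseteq> ideal_gen N H \<Longrightarrow> ideal_gen N G \<subseteq> ideal_gen N H"
  unfolding ideal_gen_def[of N G] by (auto intro!: ideal_gen_sum ideal_gen_mult)


section \<open>Prime ideals avoiding the powers of an element\<close>

definition is_ideal :: "'r::comm_ring_1 set \<Rightarrow> bool" where
  "is_ideal I \<longleftrightarrow> 0 \<in> I \<and> (\<forall>a\<in>I. \<forall>b\<in>I. a + b \<in> I) \<and> (\<forall>a\<in>I. \<forall>r. r * a \<in> I)"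

definition prime_ideal :: "'r::comm_ring_1 set \<Rightarrow> bool" where
  "prime_ideal P \<longleftrightarrow> is_ideal P \<and> 1 \<notin> P \<and> (\<forall>a b. a * b \<in> P \<longrightarrow> a \<in> P \<or> b \<in> P)"

lemma ideal_zero: "is_ideal I \<Longrightarrow> 0 \<in> I"
  by (simp add: is_ideal_def)

lemma ideal_add: "is_ideal I \<Longrightarrow> a \<in> I \<Longrightarrow> b \<in> I \<Longrightarrow> a + b \<in> I"
  by (simp add: is_ideal_def)

lemma ideal_mult_left: "is_ideal I \<Longrightarrow> a \<in> I \<Longrightarrow> r * a \<in> I"
  by (simp add: is_ideal_def)

lemma ideal_mult_right: "is_ideal I \<Longrightarrow> a \<in> I \<Longrightarrow> a * r \<in> I"
  by (simp add: is_ideal_def mult.commute)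

lemma ideal_diff: "is_ideal I \<Longrightarrow> a \<in> I \<Longrightarrow> b \<in> I \<Longrightarrow> a - b \<in> I"
  by (metis ideal_add ideal_mult_left mult_minus1 diff_conv_add_uminus)

lemma ideal_sum: "is_ideal I \<Longrightarrow> (\<And>x. x \<in> A \<Longrightarrow> g x \<in> I) \<Longrightarrow> (\<Sum>x\<in>A. g x) \<in> I"
  by (induction A rule: infinite_finite_induct) (auto intro: ideal_zero ideal_add)

lemma ideal_prod: "is_ideal I \<Longrightarrow> finite A \<Longrightarrow> x \<in> A \<Longrightarrow> g x \<in> I \<Longrightarrow> (\<Prod>x\<in>A. g x) \<in> I"
  by (metis ideal_mult_right prod.remove)

lemma prime_ideal_prod:
  assumes "prime_ideal P" "finite A" "(\<Prod>x\<in>A. g x) \<in> P"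
  shows "\<exists>x\<in>A. g x \<in> P"
  using assms(2,3) by (induction A rule: finite_induct) (use assms(1) in \<open>auto simp: prime_ideal_def\<close>)

lemma prime_ideal_power: "prime_ideal P \<Longrightarrow> a ^ k \<in> P \<Longrightarrow> a \<in> P"
  using prime_ideal_prod[of P "{..<k}" "\<lambda>_. a"] by auto

lemma is_ideal_Union_chain:
  assumes "C \<noteq> {}" and chain: "\<forall>X\<in>C. \<forall>Y\<in>C. X \<subseteq> Y \<or> Y \<subseteq> X" and "\<forall>J\<in>C. is_ideal J"
  shows "is_ideal (\<Union>C)"
  unfolding is_ideal_def
proof (intro conjI ballI allI)
  show "0 \<in> \<Union>C"
    using assms(1,3) ideal_zero by blast
next
  fix a b assume "a \<in> \<Union>C" "b \<in> \<Union>C"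
  then obtain J where "J \<in> C" "a \<in> J" "b \<in> J"
    using chain by blast
  then show "a + b \<in> \<Union>C"
    using assms(3) ideal_add by blast
next
  fix a r assume "a \<in> \<Union>C"
  then show "r * a \<in> \<Union>C"
    using assms(3) ideal_mult_left by blast
qed

lemma is_ideal_add_multiples:
  assumes "is_ideal M"
  shows "is_ideal {m + r * a | m r. m \<in> M}"
  unfolding is_ideal_def
proof (intro conjI ballI allI)
  show "0 \<in> {m + r * a | m r. m \<in> M}"
    using ideal_zero[OF assms] by (auto intro!: exI[of _ 0])
next
  fix u v assume "u \<in> {m + r * a | m r. m \<in> M}" "v \<in> {m + r * a | m r. m \<in> M}"
  then obtain m1 r1 m2 r2 where "u = m1 + r1 * a" "v = m2 + r2 * a" "m1 \<in> M" "m2 \<in> M"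
    by auto
  then have "u + v = (m1 + m2) + (r1 + r2) * a" "m1 + m2 \<in> M"
    by (simp_all add: algebra_simps ideal_add[OF assms])
  then show "u + v \<in> {m + r * a | m r. m \<in> M}" by blast
next
  fix u s assume "u \<in> {m + r * a | m r. m \<in> M}"
  then obtain m1 r1 where "u = m1 + r1 * a" "m1 \<in> M"
    by auto
  then have "s * u = s * m1 + (s * r1) * a"
    by (simp add: algebra_simps)
  moreover have "s * m1 \<in> M"
    using \<open>m1 \<in> M\<close> by (rule ideal_mult_left[OF assms])
  ultimately show "s * u \<in> {m + r * a | m r. m \<in> M}" by blast
qed

lemma maximal_ideal_avoiding_powers_is_prime:
  assumes M: "is_ideal M" "\<forall>k. x ^ k \<notin> M"
    and maximal: "\<And>X. is_ideal X \<Longrightarrow> M \<subseteq> X \<Longrightarrow> \<forall>k. x ^ k \<notin> X \<Longrightarrow> X = M"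
  shows "prime_ideal M"
proof -
  have power_mod_M: "\<exists>k m r. m \<in> M \<and> x ^ k = m + r * a" if "a \<notin> M" for a
  proof (rule ccontr)
    assume none: "\<not> ?thesis"
    let ?X = "{m + r * a | m r. m \<in> M}"
    have "M \<subseteq> ?X"
      by (force intro: exI[of _ 0])
    then have "?X = M"
      using is_ideal_add_multiples[OF M(1)] none by (intro maximal) auto
    moreover have "a \<in> ?X"
      using ideal_zero[OF M(1)] by (force intro: exI[of _ 1])
    ultimately show False
      using that by simp
  qed
  show "prime_ideal M"
    unfolding prime_ideal_def
  proof (intro conjI allI impI)
    show "1 \<notin> M"
      using M(2) power_0 by metis
  next
    fix a b assume ab: "a * b \<in> M"
    show "a \<in> M \<or> b \<in> M"
    proof (rule ccontr)
      assume "\<not> (a \<in> M \<or> b \<in> M)"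
      then obtain i m1 r1 j m2 r2 where
        1: "m1 \<in> M" "x ^ i = m1 + r1 * a" and 2: "m2 \<in> M" "x ^ j = m2 + r2 * b"
        using power_mod_M by meson
      have "x ^ (i + j) = m1 * (m2 + r2 * b) + r1 * a * m2 + (r1 * r2) * (a * b)"
        by (simp add: power_add 1 2 algebra_simps)
      also have "\<dots> \<in> M"
        by (intro ideal_add[OF M(1)] ideal_mult_left[OF M(1)] ideal_mult_right[OF M(1)] 1 2 ab)
      finally show False
        using M(2) by blast
    qed
  qed (fact M(1))
qed

lemma prime_ideal_avoiding_powers:
  fixes I :: "'r::comm_ring_1 set"
  assumes "is_ideal I" and "\<forall>k. x ^ k \<notin> I"
  obtains P where "prime_ideal P" "I \<subseteq> P" "x \<notin> P"
proof -
  define \<A> where "\<A> = {J. is_ideal J \<and> I \<subseteq> J \<and> (\<forall>k. x ^ k \<notin> J)}"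
  have "\<exists>M\<in>\<A>. \<forall>X\<in>\<A>. M \<subseteq> X \<longrightarrow> X = M"
  proof (rule subset_Zorn_nonempty)
    show "\<A> \<noteq> {}"
      using assms by (auto simp: \<A>_def)
  next
    fix C assume C: "C \<noteq> {}" "subset.chain \<A> C"
    then have "is_ideal (\<Union>C)"
      by (intro is_ideal_Union_chain) (auto simp: \<A>_def subset.chain_def)
    with C show "\<Union>C \<in> \<A>"
      by (auto simp: \<A>_def subset.chain_def)
  qed
  then obtain M where M: "is_ideal M" "I \<subseteq> M" "\<forall>k. x ^ k \<notin> M"
    and maximal: "\<And>X. X \<in> \<A> \<Longrightarrow> M \<subseteq> X \<Longrightarrow> X = M"
    by (auto simp: \<A>_def)
  have "prime_ideal M"
  proof (rule maximal_ideal_avoiding_powers_is_prime[OF M(1,3)])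
    fix X assume "is_ideal X" "M \<subseteq> X" "\<forall>k. x ^ k \<notin> X"
    then show "X = M"
      using M(2) by (intro maximal) (auto simp: \<A>_def)
  qed
  moreover have "x \<notin> M"
    using M(3) power_one_right by metis
  ultimately show ?thesis
    using M(2) that by blast
qed


section \<open>Elementary symmetric functions of values in a ring\<close>

definition esym :: "(nat \<Rightarrow> 'r::comm_ring_1) \<Rightarrow> nat \<Rightarrow> nat set \<Rightarrow> 'r" where
  "esym a t T = (\<Sum>S \<in> {S. S \<subseteq> T \<and> card S = t}. \<Prod>i\<in>S. a i)"

lemma elem_sym_eq_esym: "elem_sym n d = esym mvar d {1..n}"
  by (simp add: elem_sym_def esym_def)

lemma esym_0: "finite T \<Longrightarrow> esym a 0 T = 1"
proof -
  assume "finite T"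
  then have "{S. S \<subseteq> T \<and> card S = 0} = {{}}"
    by (auto dest: finite_subset)
  then show ?thesis by (simp add: esym_def)
qed

lemma (in ring_hom) meval_esym: "meval f h (esym mvar t A) = esym f t A"
  by (simp add: esym_def meval_sum meval_prod)

lemma subsets_card_image:
  assumes "inj_on \<sigma> A"
  shows "{S'. S' \<subseteq> \<sigma> ` A \<and> card S' = t} = image \<sigma> ` {S. S \<subseteq> A \<and> card S = t}"
proof (intro set_eqI iffI)
  fix S' assume "S' \<in> {S'. S' \<subseteq> \<sigma> ` A \<and> card S' = t}"
  then obtain S where "S \<subseteq> A" "S' = \<sigma> ` S" "card S' = t"
    by (auto simp: subset_image_iff)
  moreover from calculation have "card S = t"
    using assms by (simp add: card_image inj_on_subset)
  ultimately show "S' \<in> image \<sigma> ` {S. S \<subseteq> A \<and> card S = t}" by blast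
qed (use assms in \<open>auto simp: card_image inj_on_subset\<close>)

lemma esym_image:
  assumes "inj_on \<sigma> A"
  shows "esym a t (\<sigma> ` A) = esym (\<lambda>i. a (\<sigma> i)) t A"
proof -
  have "inj_on (image \<sigma>) {S. S \<subseteq> A \<and> card S = t}"
    using assms by (auto simp: inj_on_def inj_on_image_eq_iff)
  then have "esym a t (\<sigma> ` A) = (\<Sum>S \<in> {S. S \<subseteq> A \<and> card S = t}. \<Prod>i \<in> \<sigma> ` S. a i)"
    by (simp add: esym_def subsets_card_image[OF assms] sum.reindex)
  also have "\<dots> = esym (\<lambda>i. a (\<sigma> i)) t A"
    unfolding esym_def using assms
    by (intro sum.cong refl) (auto simp: prod.reindex inj_on_subset)
  finally show ?thesis .
qed

lemma subsets_card_Suc_insert: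
  assumes T: "finite T" and x: "x \<notin> T"
  shows "{S. S \<subseteq> insert x T \<and> card S = Suc t}
           = {S. S \<subseteq> T \<and> card S = Suc t} \<union> insert x ` {S. S \<subseteq> T \<and> card S = t}"
proof (intro set_eqI iffI)
  fix S assume S: "S \<in> {S. S \<subseteq> insert x T \<and> card S = Suc t}"
  show "S \<in> {S. S \<subseteq> T \<and> card S = Suc t} \<union> insert x ` {S. S \<subseteq> T \<and> card S = t}"
  proof (cases "x \<in> S")
    case True
    then have "S = insert x (S - {x})" "S - {x} \<in> {S. S \<subseteq> T \<and> card S = t}"
      using S T by (auto dest: finite_subset)
    then show ?thesis by blast
  qed (use S in auto)
next
  fix S assume "S \<in> {S. S \<subseteq> T \<and> card S = Suc t} \<union> insert x ` {S. S \<subseteq> T \<and> card S = t}"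
  moreover have "card (insert x S') = Suc (card S')" if "S' \<subseteq> T" for S'
    using that x by (intro card_insert_disjoint) (auto intro: rev_finite_subset[OF T])
  ultimately show "S \<in> {S. S \<subseteq> insert x T \<and> card S = Suc t}"
    by auto
qed

lemma esym_Suc_insert:
  assumes T: "finite T" and x: "x \<notin> T"
  shows "esym a (Suc t) (insert x T) = esym a (Suc t) T + a x * esym a t T"
proof -
  let ?A = "{S. S \<subseteq> T \<and> card S = Suc t}"
  let ?B = "{S. S \<subseteq> T \<and> card S = t}"
  have "inj_on (insert x) ?B"
    using x by (intro inj_onI) (metis Diff_insert_absorb subsetD mem_Collect_eq)
  moreover have "finite ?A" "finite ?B" "?A \<inter> insert x ` ?B = {}"
    using T x by auto
  ultimately have "esym a (Suc t) (insert x T) = esym a (Suc t) T + (\<Sum>S\<in>?B. \<Prod>i\<in>insert x S. a i)"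
    unfolding esym_def subsets_card_Suc_insert[OF T x] by (simp add: sum.union_disjoint sum.reindex)
  also have "(\<Sum>S\<in>?B. \<Prod>i\<in>insert x S. a i) = (\<Sum>S\<in>?B. a x * (\<Prod>i\<in>S. a i))"
  proof (rule sum.cong)
    fix S assume "S \<in> ?B"
    then have "finite S" "x \<notin> S"
      using x by (auto intro: rev_finite_subset[OF T])
    then show "(\<Prod>i\<in>insert x S. a i) = a x * (\<Prod>i\<in>S. a i)"
      by simp
  qed simp
  finally show ?thesis
    by (simp add: esym_def sum_distrib_left)
qed

lemma esym_Suc_insert_diff:
  assumes "finite T" "u \<notin> T" "v \<notin> T"
  shows "esym a (Suc t) (insert u T) - esym a (Suc t) (insert v T) = (a u - a v) * esym a t T"
  using assms by (simp add: esym_Suc_insert algebra_simps)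

lemma prod_minus_power_in_ideal:
  assumes "is_ideal P" "finite S" "\<forall>i\<in>S. a i - c \<in> P"
  shows "(\<Prod>i\<in>S. a i) - c ^ card S \<in> P"
  using assms(2,3)
proof (induction S rule: finite_induct)
  case empty
  then show ?case using ideal_zero[OF assms(1)] by simp
next
  case (insert x F)
  have "(\<Prod>i\<in>insert x F. a i) - c ^ card (insert x F)
      = (a x - c) * (\<Prod>i\<in>F. a i) + c * ((\<Prod>i\<in>F. a i) - c ^ card F)"
    using insert by (simp add: algebra_simps)
  also have "\<dots> \<in> P"
    using insert assms(1) by (intro ideal_add ideal_mult_left ideal_mult_right) auto
  finally show ?case .
qed

lemma esym_minus_binomial_in_ideal:
  assumes "is_ideal P" "finite T" "\<forall>i\<in>T. a i - c \<in> P"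
  shows "esym a t T - of_nat (card T choose t) * c ^ t \<in> P"
proof -
  have "esym a t T - of_nat (card T choose t) * c ^ t
      = (\<Sum>S \<in> {S. S \<subseteq> T \<and> card S = t}. (\<Prod>i\<in>S. a i) - c ^ card S)"
    using assms(2) by (simp add: esym_def sum_subtractf n_subsets)
  also have "\<dots> \<in> P"
    using assms by (intro ideal_sum prod_minus_power_in_ideal) (auto dest: finite_subset)
  finally show ?thesis .
qed

lemma esym_minus_prod_in_ideal:
  assumes "is_ideal P" "finite T" "D \<subseteq> T" "card D = t" and zero: "\<forall>i \<in> T - D. a i \<in> P"
  shows "esym a t T - (\<Prod>i\<in>D. a i) \<in> P"
proof -
  let ?S = "{S. S \<subseteq> T \<and> card S = t}"
  have "finite ?S" "D \<in> ?S"
    using assms(2-4) by auto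
  then have "esym a t T - (\<Prod>i\<in>D. a i) = (\<Sum>S\<in>?S - {D}. \<Prod>i\<in>S. a i)"
    unfolding esym_def by (simp add: sum.remove)
  also have "\<dots> \<in> P"
  proof (rule ideal_sum[OF assms(1)])
    fix S assume S: "S \<in> ?S - {D}"
    then have "finite S" "\<not> S \<subseteq> D"
      using assms(2-4) card_subset_eq[of D S] by (auto dest: finite_subset)
    then obtain i where "i \<in> S" "i \<in> T - D"
      using S by blast
    then show "(\<Prod>i\<in>S. a i) \<in> P"
      using zero ideal_prod[OF assms(1) \<open>finite S\<close>] by blast
  qed
  finally show ?thesis .
qed


section \<open>Vanishing of e_d on all n-sets modulo a prime\<close>

lemma choose_in_ideal_by_pascal:
  assumes "is_ideal P" "j \<le> d" "d \<le> n"
    and "\<And>t. j \<le> t \<Longrightarrow> t \<le> d \<Longrightarrow> of_nat ((n - d + j) choose t) \<in> P"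
  shows "(of_nat (n choose d) :: 'r::comm_ring_1) \<in> P"
  using assms(2-4)
proof (induction "d - j" arbitrary: j)
  case 0
  then show ?case by (simp add: le_antisym)
next
  case (Suc k)
  have "of_nat ((n - d + Suc j) choose t) \<in> P" if t: "Suc j \<le> t" "t \<le> d" for t
  proof -
    obtain t' where t': "t = Suc t'"
      using t by (cases t) auto
    have "n - d + Suc j = Suc (n - d + j)"
      using Suc by simp
    then have "(n - d + Suc j) choose t = ((n - d + j) choose t') + ((n - d + j) choose t)"
      using t' by simp
    then show ?thesis
      using Suc.prems(3) t t' by (auto intro!: ideal_add[OF assms(1)])
  qed
  then show ?case
    using Suc by (intro Suc.hyps(1)[of "Suc j"]) auto
qed

lemma esym_vanish_all_congruent:
  fixes a :: "nat \<Rightarrow> 'r::comm_ring_1"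
  assumes P: "prime_ideal P" and C: "of_nat (n choose d) \<notin> P" and "k < d" "d \<le> n"
    and W: "finite W" "Suc (n - d + k) \<le> card W"
    and vanish: "\<And>t T. k < t \<Longrightarrow> t \<le> d \<Longrightarrow> T \<subseteq> W \<Longrightarrow> card T = Suc (n - d + k) \<Longrightarrow> esym a t T \<in> P"
    and congruent: "\<And>u v. u \<in> W \<Longrightarrow> v \<in> W \<Longrightarrow> a u - a v \<in> P"
    and "w \<in> W"
  shows "a w \<in> P"
proof (rule ccontr)
  assume aw: "a w \<notin> P"
  have I: "is_ideal P"
    using P by (simp add: prime_ideal_def)
  obtain T where T: "T \<subseteq> W" "card T = Suc (n - d + k)" "finite T"
    using obtain_subset_with_card_n[OF W(2)] by blast
  have "of_nat ((n - d + Suc k) choose t) \<in> P" if t: "Suc k \<le> t" "t \<le> d" for t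
  proof -
    have "esym a t T \<in> P"
      using vanish t T by auto
    moreover have "esym a t T - of_nat (card T choose t) * a w ^ t \<in> P"
      using T congruent \<open>w \<in> W\<close> by (intro esym_minus_binomial_in_ideal[OF I]) auto
    ultimately have "esym a t T - (esym a t T - of_nat (card T choose t) * a w ^ t) \<in> P"
      by (rule ideal_diff[OF I])
    then have "of_nat ((n - d + Suc k) choose t) * a w ^ t \<in> P"
      using T(2) by simp
    then have "of_nat ((n - d + Suc k) choose t) \<in> P \<or> a w ^ t \<in> P"
      using P by (simp add: prime_ideal_def)
    then show ?thesis
      using prime_ideal_power[OF P, of "a w" t] aw by blast
  qed
  from choose_in_ideal_by_pascal[OF I _ _ this] assms(3,4)
  have "of_nat (n choose d) \<in> P"
    by auto
  with C show False ..
qed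

lemma esym_vanish_descent:
  fixes a :: "nat \<Rightarrow> 'r::comm_ring_1"
  assumes P: "prime_ideal P" and "k < d" and "finite W"
    and vanish: "\<And>t T. k < t \<Longrightarrow> t \<le> d \<Longrightarrow> T \<subseteq> W \<Longrightarrow> card T = Suc m \<Longrightarrow> esym a t T \<in> P"
    and uv: "u \<in> W" "v \<in> W" "a u - a v \<notin> P"
    and T: "T \<subseteq> W - {u, v}" "card T = m" and t: "k \<le> t" "t \<le> d"
  shows "esym a t T \<in> P"
proof -
  have I: "is_ideal P"
    using P by (simp add: prime_ideal_def)
  have fT: "finite T" and uT: "u \<notin> T" "v \<notin> T"
    using T \<open>finite W\<close> by (auto dest: finite_subset)
  have ins: "insert u T \<subseteq> W" "insert v T \<subseteq> W"
    "card (insert u T) = Suc m" "card (insert v T) = Suc m"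
    using T uv fT uT by auto
  have below_d: "esym a s T \<in> P" if s: "k \<le> s" "s < d" for s
  proof -
    have "esym a (Suc s) (insert u T) - esym a (Suc s) (insert v T) \<in> P"
      using s ins by (intro ideal_diff[OF I] vanish) auto
    then have "(a u - a v) * esym a s T \<in> P"
      by (simp add: esym_Suc_insert_diff fT uT)
    then show ?thesis
      using P uv(3) by (auto simp: prime_ideal_def)
  qed
  show ?thesis
  proof (cases "t < d")
    case False
    then obtain s where s: "t = Suc s" "d = Suc s"
      using t \<open>k < d\<close> by (cases d) auto
    have "esym a (Suc s) (insert u T) - a u * esym a s T \<in> P"
      using s \<open>k < d\<close> ins by (intro ideal_diff[OF I] ideal_mult_left[OF I] vanish below_d) auto
    then show ?thesis
      by (simp add: esym_Suc_insert fT uT s)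
  qed (use below_d t in auto)
qed

lemma card_Diff_doubleton:
  assumes "finite W" "u \<in> W" "v \<in> W" "u \<noteq> v"
  shows "card W = card (W - {u, v}) + 2"
proof -
  have uv: "{u, v} \<subseteq> W" "card {u, v} = 2"
    using assms by auto
  then have "card (W - {u, v}) = card W - 2" "2 \<le> card W"
    using card_mono[OF assms(1) uv(1)] by (simp_all add: card_Diff_subset)
  then show ?thesis
    by linarith
qed

lemma esym_vanish_few_nonzero:
  fixes a :: "nat \<Rightarrow> 'r::comm_ring_1"
  assumes P: "prime_ideal P" and C: "of_nat (n choose d) \<notin> P" and "d \<le> n"
  shows "k < d \<Longrightarrow> finite W \<Longrightarrow> n - d + 2 * Suc k \<le> card W \<Longrightarrow>
    (\<And>t T. k < t \<Longrightarrow> t \<le> d \<Longrightarrow> T \<subseteq> W \<Longrightarrow> card T = Suc (n - d + k) \<Longrightarrow> esym a t T \<in> P) \<Longrightarrow>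
    card W \<le> card {i\<in>W. a i \<in> P} + 2 * k"
proof (induction k arbitrary: W rule: less_induct)
  case (less k W)
  show ?case
  proof (cases "\<exists>u\<in>W. \<exists>v\<in>W. a u - a v \<notin> P")
    case False
    have "a w \<in> P" if "w \<in> W" for w
    proof (rule esym_vanish_all_congruent[OF P C less.prems(1) \<open>d \<le> n\<close> less.prems(2) _ less.prems(4) _ that])
      show "Suc (n - d + k) \<le> card W"
        using less.prems(3) by simp
      show "a u - a v \<in> P" if "u \<in> W" "v \<in> W" for u v
        using False that by auto
    qed
    then have "{i\<in>W. a i \<in> P} = W"
      by blast
    then show ?thesis
      by simp
  next
    case True
    then obtain u v where uv: "u \<in> W" "v \<in> W" "a u - a v \<notin> P"
      by blast
    then have card_W: "card W = card (W - {u, v}) + 2"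
      using P less.prems(2) by (intro card_Diff_doubleton) (auto simp: prime_ideal_def is_ideal_def)
    note vanish' = esym_vanish_descent[OF P less.prems(1,2,4) uv]
    show ?thesis
    proof (cases k)
      case 0
      obtain T where "T \<subseteq> W - {u, v}" "card T = n - d" "finite T"
        using obtain_subset_with_card_n[of "n - d" "W - {u, v}"] card_W less.prems(3) 0 by auto
      then have "1 \<in> P"
        using vanish'[where T = T and t = 0] esym_0[of T a] 0 by simp
      then show ?thesis
        using P by (simp add: prime_ideal_def)
    next
      case (Suc k')
      have "card (W - {u, v}) \<le> card {i \<in> W - {u, v}. a i \<in> P} + 2 * k'"
        using Suc less.prems(1-3) card_W vanish' by (intro less.IH) auto
      moreover have "card {i \<in> W - {u, v}. a i \<in> P} \<le> card {i\<in>W. a i \<in> P}"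
        using less.prems(2) by (intro card_mono) auto
      ultimately show ?thesis
        using card_W Suc by simp
    qed
  qed
qed

lemma esym_vanish_imp_factor_in_prime:
  fixes a :: "nat \<Rightarrow> 'r::comm_ring_1"
  assumes P: "prime_ideal P" and C: "of_nat (n choose d) \<notin> P"
    and "1 \<le> d" "d \<le> n" "n + d \<le> N"
    and vanish: "\<And>T. T \<subseteq> {1..N} \<Longrightarrow> card T = n \<Longrightarrow> esym a d T \<in> P"
    and D: "D \<subseteq> {1..N}" "card D = d"
  shows "\<exists>i\<in>D. a i \<in> P"
proof (rule ccontr)
  assume nonzero: "\<not> (\<exists>i\<in>D. a i \<in> P)"
  have I: "is_ideal P"
    using P by (simp add: prime_ideal_def)
  define Z where "Z = {i\<in>{1..N}. a i \<in> P}"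
  have "card {1..N} \<le> card Z + 2 * (d - 1)"
    unfolding Z_def
  proof (rule esym_vanish_few_nonzero[OF P C \<open>d \<le> n\<close>])
    fix t T assume "d - 1 < t" "t \<le> d" "T \<subseteq> {1..N}" "card T = Suc (n - d + (d - 1))"
    moreover from this have "t = d" "card T = n"
      using assms(3,4) by auto
    ultimately show "esym a t T \<in> P"
      using vanish by simp
  qed (use assms(3-5) in auto)
  then have "n - d \<le> card Z"
    using assms(3-5) by simp
  then obtain Z0 where Z0: "Z0 \<subseteq> Z" "card Z0 = n - d" "finite Z0"
    using obtain_subset_with_card_n by blast
  have "finite D" "D \<inter> Z0 = {}"
    using D nonzero Z0(1) by (auto simp: Z_def dest: finite_subset)
  then have T: "D \<union> Z0 \<subseteq> {1..N}" "card (D \<union> Z0) = n" "finite (D \<union> Z0)"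
    using D Z0 assms(4) by (auto simp: Z_def card_Un_disjoint)
  have "esym a d (D \<union> Z0) - (\<Prod>i\<in>D. a i) \<in> P"
    using T(3) D(2) Z0(1) by (intro esym_minus_prod_in_ideal[OF I]) (auto simp: Z_def)
  with vanish[OF T(1,2)]
  have "esym a d (D \<union> Z0) - (esym a d (D \<union> Z0) - (\<Prod>i\<in>D. a i)) \<in> P"
    by (rule ideal_diff[OF I])
  then show False
    using prime_ideal_prod[OF P \<open>finite D\<close>] nonzero by simp
qed


lemma permutes_exists_image_eq:
  assumes U: "finite U" and A: "A \<subseteq> U" and B: "B \<subseteq> U" and c: "card A = card B"
  obtains \<sigma> where "\<sigma> permutes U" "\<sigma> ` A = B"
proof -
  have fA: "finite A" "finite B"
    using U A B by (auto dest: finite_subset)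
  obtain h1 where h1: "bij_betw h1 A B"
    using finite_same_card_bij[OF fA c] by blast
  have "card (U - A) = card (U - B)"
    using U A B c fA by (simp add: card_Diff_subset)
  then obtain h2 where h2: "bij_betw h2 (U - A) (U - B)"
    using finite_same_card_bij[of "U - A" "U - B"] U by blast
  define \<sigma> where "\<sigma> x = (if x \<in> A then h1 x else if x \<in> U then h2 x else x)" for x
  have b1: "bij_betw \<sigma> A B"
    using h1 by (rule bij_betw_cong[THEN iffD1, rotated]) (simp add: \<sigma>_def)
  have b2: "bij_betw \<sigma> (U - A) (U - B)"
    using h2 by (rule bij_betw_cong[THEN iffD1, rotated]) (simp add: \<sigma>_def)
  have "bij_betw \<sigma> U U"
    using bij_betw_combine[OF b1 b2] A B by (simp add: Un_absorb1 Un_Diff_cancel)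
  then have "\<sigma> permutes U"
    by (rule bij_imp_permutes) (auto simp: \<sigma>_def A[THEN subsetD])
  with b1 show ?thesis
    using that by (simp add: bij_betw_def)
qed

lemma orbit_SN_eq_image:
  assumes "k \<le> N"
    and equivariant: "\<And>\<sigma>. inj \<sigma> \<Longrightarrow> perm_mpoly \<sigma> (F {1..k}) = F (\<sigma> ` {1..k})"
  shows "orbit_SN N (F {1..k}) = {F T | T. T \<subseteq> {1..N} \<and> card T = k}"
proof (intro set_eqI iffI)
  fix g assume "g \<in> orbit_SN N (F {1..k})"
  then obtain \<sigma> where \<sigma>: "\<sigma> permutes {1..N}" "g = perm_mpoly \<sigma> (F {1..k})"
    by (auto simp: orbit_SN_def)
  then have "g = F (\<sigma> ` {1..k})" "\<sigma> ` {1..k} \<subseteq> {1..N}" "card (\<sigma> ` {1..k}) = k"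
    using equivariant[OF permutes_inj[OF \<sigma>(1)]] permutes_inj[OF \<sigma>(1)]
      permutes_image[OF \<sigma>(1)] assms(1)
    by (auto simp: card_image inj_on_subset)
  then show "g \<in> {F T | T. T \<subseteq> {1..N} \<and> card T = k}" by blast
next
  fix g assume "g \<in> {F T | T. T \<subseteq> {1..N} \<and> card T = k}"
  then obtain T where T: "T \<subseteq> {1..N}" "card T = k" "g = F T" by auto
  obtain \<sigma> where \<sigma>: "\<sigma> permutes {1..N}" "\<sigma> ` {1..k} = T"
    using permutes_exists_image_eq[of "{1..N}" "{1..k}" T] T assms(1) by auto
  then have "perm_mpoly \<sigma> (F {1..k}) = g"
    using T equivariant[OF permutes_inj[OF \<sigma>(1)]] by simp
  then show "g \<in> orbit_SN N (F {1..k})"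
    using \<sigma> by (auto simp: orbit_SN_def)
qed

lemma orbit_SN_elem_sym:
  assumes "n \<le> N"
  shows "orbit_SN N (elem_sym n d :: 'a::comm_ring_1 mpoly)
           = {esym mvar d T | T. T \<subseteq> {1..N} \<and> card T = n}"
proof -
  have "perm_mpoly \<sigma> (esym mvar d A :: 'a mpoly) = esym mvar d (\<sigma> ` A)" if "inj \<sigma>" for \<sigma> A
    using that by (simp add: perm_mpoly_eq_meval mconst.meval_esym esym_image inj_on_subset)
  then show ?thesis
    unfolding elem_sym_eq_esym by (intro orbit_SN_eq_image assms)
qed

lemma orbit_SN_prod_mvar:
  assumes "d \<le> N"
  shows "orbit_SN N (\<Prod>i\<in>{1..d}. mvar i :: 'a::comm_ring_1 mpoly)
           = {\<Prod>i\<in>B. mvar i | B. B \<subseteq> {1..N} \<and> card B = d}"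
proof -
  have "perm_mpoly \<sigma> (\<Prod>i\<in>A. mvar i :: 'a mpoly) = (\<Prod>i\<in>\<sigma> ` A. mvar i)" if "inj \<sigma>" for \<sigma> A
    using that by (simp add: perm_mpoly_eq_meval mconst.meval_prod prod.reindex inj_on_subset)
  then show ?thesis
    by (intro orbit_SN_eq_image[where F = "\<lambda>A. \<Prod>i\<in>A. mvar i"] assms)
qed

lemma ideal_gen_elem_sym_subset:
  assumes "d \<le> n" "n \<le> N"
  shows "ideal_gen N (orbit_SN N (elem_sym n d :: 'a::comm_ring_1 mpoly))
           \<subseteq> ideal_gen N (orbit_SN N (\<Prod>i\<in>{1..d}. mvar i))"
proof (rule ideal_gen_least, rule subsetI)
  fix g assume "g \<in> orbit_SN N (elem_sym n d :: 'a mpoly)"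
  then obtain T where T: "T \<subseteq> {1..N}" "g = esym mvar d T"
    by (auto simp: orbit_SN_elem_sym[OF assms(2)])
  have "(\<Prod>i\<in>S. mvar i) \<in> orbit_SN N (\<Prod>i\<in>{1..d}. mvar i :: 'a mpoly)"
    if "S \<subseteq> T" "card S = d" for S
    using that T(1) assms by (subst orbit_SN_prod_mvar) auto
  then show "g \<in> ideal_gen N (orbit_SN N (\<Prod>i\<in>{1..d}. mvar i))"
    unfolding T(2) esym_def by (intro ideal_gen_sum ideal_gen_generator) auto
qed


lemma radical_mono: "I \<subseteq> J \<Longrightarrow> radical N I \<subseteq> radical N J"
  unfolding radical_def by blast

lemma radical_add:
  assumes a: "a \<in> radical N (ideal_gen N G)" and b: "b \<in> radical N (ideal_gen N G)"
  shows "a + b \<in> radical N (ideal_gen N G)"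
proof -
  obtain k1 k2 where k: "a ^ k1 \<in> ideal_gen N G" "b ^ k2 \<in> ideal_gen N G"
    and ab: "a \<in> poly_ring N" "b \<in> poly_ring N"
    using a b by (auto simp: radical_def)
  have coeff: "of_nat ((k1 + k2) choose i) * a ^ i' * b ^ j' \<in> poly_ring N" for i i' j'
    using ab by (intro poly_ring_mult poly_ring_power poly_ring_of_nat)
  have "of_nat ((k1 + k2) choose i) * a ^ i * b ^ (k1 + k2 - i) \<in> ideal_gen N G" for i
  proof (cases "k1 \<le> i")
    case True
    then have "a ^ i = a ^ (i - k1) * a ^ k1"
      by (simp flip: power_add)
    then have "of_nat ((k1 + k2) choose i) * a ^ i * b ^ (k1 + k2 - i)
        = (of_nat ((k1 + k2) choose i) * a ^ (i - k1) * b ^ (k1 + k2 - i)) * a ^ k1"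
      by (simp add: mult_ac)
    then show ?thesis
      using k coeff by (simp add: ideal_gen_mult)
  next
    case False
    then have "b ^ (k1 + k2 - i) = b ^ (k1 - i) * b ^ k2"
      by (simp flip: power_add)
    then have "of_nat ((k1 + k2) choose i) * a ^ i * b ^ (k1 + k2 - i)
        = (of_nat ((k1 + k2) choose i) * a ^ i * b ^ (k1 - i)) * b ^ k2"
      by (simp add: mult_ac)
    then show ?thesis
      using k coeff by (simp add: ideal_gen_mult)
  qed
  then have "(a + b) ^ (k1 + k2) \<in> ideal_gen N G"
    by (simp add: binomial_ring ideal_gen_sum)
  then show ?thesis
    using ab by (auto simp: radical_def intro: poly_ring_add)
qed

lemma radical_mult:
  assumes r: "r \<in> poly_ring N" and a: "a \<in> radical N (ideal_gen N G)"
  shows "r * a \<in> radical N (ideal_gen N G)"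
proof -
  obtain k where k: "a ^ k \<in> ideal_gen N G" "a \<in> poly_ring N"
    using a by (auto simp: radical_def)
  then have "(r * a) ^ k \<in> ideal_gen N G"
    using r by (simp add: power_mult_distrib ideal_gen_mult poly_ring_power)
  then show ?thesis
    using r k by (auto simp: radical_def intro: poly_ring_mult)
qed

lemma radical_sum:
  "(\<And>x. x \<in> A \<Longrightarrow> g x \<in> radical N (ideal_gen N G)) \<Longrightarrow> (\<Sum>x\<in>A. g x) \<in> radical N (ideal_gen N G)"
proof (induction A rule: infinite_finite_induct)
  case (infinite A)
  then show ?case
    by (auto simp: radical_def intro!: exI[of _ 1])
next
  case empty
  then show ?case
    by (auto simp: radical_def intro!: exI[of _ 1])
qed (auto intro: radical_add)

lemma ideal_gen_subset_radical:
  assumes "G \<subseteq> radical N (ideal_gen N H)"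
  shows "ideal_gen N G \<subseteq> radical N (ideal_gen N H)"
  using assms unfolding ideal_gen_def[of N G] by (auto intro!: radical_sum radical_mult)


section \<open>The squarefree monomial ideal is radical\<close>

lemma monomial_in_ideal_gen_prod_mvar:
  fixes c :: "'a::comm_ring_1"
  assumes "d \<le> N" and m: "Poly_Mapping.keys m \<subseteq> {1..N}" "d \<le> card (Poly_Mapping.keys m)"
  shows "Poly_Mapping.single m c \<in> ideal_gen N (orbit_SN N (\<Prod>i\<in>{1..d}. mvar i :: 'a mpoly))"
proof -
  obtain B where B: "B \<subseteq> Poly_Mapping.keys m" "card B = d" "finite B"
    using obtain_subset_with_card_n[OF m(2)] by blast
  define ind where "ind = (\<Sum>i\<in>B. Poly_Mapping.single i (1::nat))"
  have "Poly_Mapping.lookup ind i = (if i \<in> B then 1 else 0)" for i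
    by (simp add: ind_def lookup_sum lookup_single when_def B(3))
  then have "m = (m - ind) + ind"
    using B(1) by (intro poly_mapping_eqI) (auto simp: lookup_add lookup_minus in_keys_iff)
  then have "Poly_Mapping.single m c = Poly_Mapping.single (m - ind) c * Poly_Mapping.single ind (1::'a)"
    by (metis mult_single mult.right_neutral)
  also have "Poly_Mapping.single ind (1::'a) = (\<Prod>i\<in>B. mvar i)"
    by (simp add: mvar_def prod_single_one ind_def)
  finally have split: "Poly_Mapping.single m c = Poly_Mapping.single (m - ind) c * (\<Prod>i\<in>B. mvar i)" .
  have "Poly_Mapping.keys (m - ind) \<subseteq> Poly_Mapping.keys m"
    by (auto simp: in_keys_iff lookup_minus)
  then have "Poly_Mapping.single (m - ind) c \<in> poly_ring N"
    using m(1) by (auto simp: poly_ring_def)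
  moreover have "(\<Prod>i\<in>B. mvar i) \<in> orbit_SN N (\<Prod>i\<in>{1..d}. mvar i :: 'a mpoly)"
    using B m(1) assms(1) by (subst orbit_SN_prod_mvar) auto
  ultimately show ?thesis
    unfolding split by (intro ideal_gen_mult ideal_gen_generator)
qed

lemma restrict_vars_ideal_gen_prod_mvar:
  assumes "d \<le> N" "finite B" "card B < d"
    and x: "x \<in> ideal_gen N (orbit_SN N (\<Prod>i\<in>{1..d}. mvar i :: 'a::comm_ring_1 mpoly))"
  shows "restrict_vars B x = 0"
proof -
  obtain F c where F: "x = (\<Sum>g\<in>F. c g * g)" "F \<subseteq> orbit_SN N (\<Prod>i\<in>{1..d}. mvar i :: 'a mpoly)"
    using x unfolding ideal_gen_def by blast
  have "restrict_vars B g = 0" if "g \<in> F" for g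
  proof -
    obtain B' where B': "B' \<subseteq> {1..N}" "card B' = d" "g = (\<Prod>i\<in>B'. mvar i)"
      using F(2) \<open>g \<in> F\<close> orbit_SN_prod_mvar[OF assms(1)] by auto
    have "\<not> B' \<subseteq> B"
    proof
      assume "B' \<subseteq> B"
      then have "card B' \<le> card B"
        by (rule card_mono[OF assms(2)])
      with B'(2) assms(3) show False
        by simp
    qed
    then obtain i where "i \<in> B'" "i \<notin> B" by blast
    moreover have "finite B'"
      using B'(1) by (rule finite_subset) simp
    ultimately show ?thesis
      unfolding B'(3) restrict_vars_prod_mvar by (intro prod_zero) auto
  qed
  then show ?thesis
    unfolding F(1) by (simp add: restrict_vars_sum restrict_vars_mult)
qed

lemma radical_ideal_gen_prod_mvar:
  fixes d N :: nat
  assumes "d \<le> N"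
  shows "radical N (ideal_gen N (orbit_SN N (\<Prod>i\<in>{1..d}. mvar i :: 'a::field mpoly)))
           \<subseteq> ideal_gen N (orbit_SN N (\<Prod>i\<in>{1..d}. mvar i))"
proof
  fix f :: "'a mpoly"
  assume "f \<in> radical N (ideal_gen N (orbit_SN N (\<Prod>i\<in>{1..d}. mvar i)))"
  then obtain k where f: "f \<in> poly_ring N"
    and fk: "f ^ k \<in> ideal_gen N (orbit_SN N (\<Prod>i\<in>{1..d}. mvar i))"
    by (auto simp: radical_def)
  have large_support: "d \<le> card (Poly_Mapping.keys m)" if m: "m \<in> Poly_Mapping.keys f" for m
  proof (rule ccontr)
    let ?B = "Poly_Mapping.keys m"
    assume "\<not> d \<le> card ?B"
    then have "restrict_vars ?B (f ^ k) = 0"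
      by (intro restrict_vars_ideal_gen_prod_mvar[OF assms _ _ fk]) auto
    then have "Poly_Mapping.lookup (restrict_vars ?B f) m = 0"
      by (simp add: restrict_vars_power)
    then show False
      using m by (simp add: lookup_restrict_vars in_keys_iff)
  qed
  have "f = (\<Sum>m \<in> Poly_Mapping.keys f. Poly_Mapping.single m (Poly_Mapping.lookup f m))"
    by (rule poly_mapping_sum_single)
  also have "\<dots> \<in> ideal_gen N (orbit_SN N (\<Prod>i\<in>{1..d}. mvar i))"
    using f large_support
    by (intro ideal_gen_sum monomial_in_ideal_gen_prod_mvar[OF assms]) (auto simp: poly_ring_def)
  finally show "f \<in> ideal_gen N (orbit_SN N (\<Prod>i\<in>{1..d}. mvar i))" .
qed


section \<open>The squarefree monomials lie in the radical\<close>

text \<open>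
  \<open>ideal_gen N G\<close> is an ideal of the subring \<open>poly_ring N\<close> only; its preimage under
  \<open>restrict_vars {1..N}\<close> is an ideal of the whole polynomial type, where
  \<open>prime_ideal_avoiding_powers\<close> applies.
\<close>

lemma is_ideal_restrict_vars_preimage: "is_ideal {x. restrict_vars {1..N} x \<in> ideal_gen N G}"
proof -
  have "restrict_vars {1..N} r * restrict_vars {1..N} a \<in> ideal_gen N G"
    if "restrict_vars {1..N} a \<in> ideal_gen N G" for r a
    by (intro ideal_gen_mult restrict_vars_in_poly_ring that)
  then show ?thesis
    unfolding is_ideal_def
    by (simp add: restrict_vars_zero restrict_vars_add restrict_vars_mult ideal_gen_add)
qed

lemma mconst_notin_prime_ideal: "c \<noteq> 0 \<Longrightarrow> prime_ideal P \<Longrightarrow> mconst (c::'a::field) \<notin> P"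
  using ideal_mult_right[of P "mconst c" "mconst (inverse c)"]
  by (auto simp: prime_ideal_def mconst_def mult_single)

lemma prod_mvar_in_radical_elem_sym:
  assumes "1 \<le> d" "d \<le> n" "n + d \<le> N" and char: "\<not> CHAR('a::field) dvd (n choose d)"
    and B: "B \<subseteq> {1..N}" "card B = d"
  shows "(\<Prod>i\<in>B. mvar i :: 'a mpoly) \<in> radical N (ideal_gen N (orbit_SN N (elem_sym n d :: 'a mpoly)))"
proof (rule ccontr)
  let ?g = "\<Prod>i\<in>B. mvar i :: 'a mpoly"
  let ?I = "ideal_gen N (orbit_SN N (elem_sym n d :: 'a mpoly))"
  let ?Q = "{x. restrict_vars {1..N} x \<in> ?I}"
  assume "?g \<notin> radical N ?I"
  moreover have "restrict_vars {1..N} (?g ^ k) = ?g ^ k" for k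
    using poly_ring_power[OF poly_ring_prod_mvar[OF B(1)]] by (simp only: poly_ring_iff_restrict_vars)
  ultimately have "\<forall>k. ?g ^ k \<notin> ?Q"
    using poly_ring_prod_mvar[OF B(1)] by (auto simp: radical_def)
  then obtain P where P: "prime_ideal P" "?Q \<subseteq> P" "?g \<notin> P"
    using prime_ideal_avoiding_powers[OF is_ideal_restrict_vars_preimage] by blast
  have "esym mvar d T \<in> P" if "T \<subseteq> {1..N}" "card T = n" for T
  proof -
    have "esym mvar d T \<in> ?I"
      using that assms(3) by (intro ideal_gen_generator) (auto simp: orbit_SN_elem_sym)
    moreover have "(esym mvar d T :: 'a mpoly) \<in> poly_ring N"
      unfolding esym_def using that by (intro poly_ring_sum poly_ring_prod_mvar) auto
    ultimately have "esym mvar d T \<in> ?Q"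
      by (simp only: poly_ring_iff_restrict_vars mem_Collect_eq)
    with P(2) show ?thesis
      by blast
  qed
  moreover have "of_nat (n choose d) \<notin> P"
    using mconst_notin_prime_ideal[OF _ P(1), of "of_nat (n choose d)"] char
    by (simp add: of_nat_eq_0_iff_char_dvd mconst_def)
  ultimately obtain i where "i \<in> B" "mvar i \<in> P"
    using esym_vanish_imp_factor_in_prime[OF P(1) _ assms(1-3) _ B] by blast
  then have "?g \<in> P"
    using P(1) B(1) by (intro ideal_prod) (auto simp: prime_ideal_def dest: finite_subset)
  with P(3) show False ..
qed

lemma radical_ideal_gen_elem_sym:
  assumes "1 \<le> d" "d \<le> n" "n + d \<le> N" "\<not> CHAR('a::field) dvd (n choose d)"
  shows "radical N (ideal_gen N (orbit_SN N (elem_sym n d :: 'a mpoly)))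
           = ideal_gen N (orbit_SN N (\<Prod>i\<in>{1..d}. mvar i))"
proof
  have "n \<le> N" "d \<le> N"
    using assms by auto
  then show "radical N (ideal_gen N (orbit_SN N (elem_sym n d :: 'a mpoly)))
               \<subseteq> ideal_gen N (orbit_SN N (\<Prod>i\<in>{1..d}. mvar i))"
    using radical_mono[OF ideal_gen_elem_sym_subset] radical_ideal_gen_prod_mvar assms(2)
    by blast
  have "orbit_SN N (\<Prod>i\<in>{1..d}. mvar i :: 'a mpoly)
          \<subseteq> radical N (ideal_gen N (orbit_SN N (elem_sym n d :: 'a mpoly)))"
    unfolding orbit_SN_prod_mvar[OF \<open>d \<le> N\<close>] using prod_mvar_in_radical_elem_sym[OF assms] by blast
  then show "ideal_gen N (orbit_SN N (\<Prod>i\<in>{1..d}. mvar i))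
               \<subseteq> radical N (ideal_gen N (orbit_SN N (elem_sym n d :: 'a mpoly)))"
    by (rule ideal_gen_subset_radical)
qed


section \<open>Characteristic dividing the binomial coefficient\<close>

lemma monomial_notin_radical_elem_sym:
  assumes "n \<le> N" and char: "CHAR('a::field) dvd (n choose d)"
  shows "mmonom \<alpha> \<notin> radical N (ideal_gen N (orbit_SN N (elem_sym n d :: 'a mpoly)))"
proof
  let ?ev = "meval (\<lambda>_. 1) (id :: 'a \<Rightarrow> 'a)"
  have ev_generator: "?ev g = 0" if g: "g \<in> orbit_SN N (elem_sym n d :: 'a mpoly)" for g
  proof -
    obtain T where T: "T \<subseteq> {1..N}" "card T = n" "g = esym mvar d T"
      using g by (auto simp: orbit_SN_elem_sym[OF assms(1)])
    then have "?ev g = esym (\<lambda>_. 1) d T"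
      by (simp add: coeff_id.meval_esym)
    also have "\<dots> = of_nat (n choose d)"
      using T by (simp add: esym_def n_subsets finite_subset[OF T(1)])
    also have "\<dots> = 0"
      using char by (simp add: of_nat_eq_0_iff_char_dvd)
    finally show ?thesis .
  qed
  assume "mmonom \<alpha> \<in> radical N (ideal_gen N (orbit_SN N (elem_sym n d :: 'a mpoly)))"
  then obtain k F c where "mmonom \<alpha> ^ k = (\<Sum>g\<in>F. c g * g)"
    and "F \<subseteq> orbit_SN N (elem_sym n d :: 'a mpoly)"
    by (auto simp: radical_def ideal_gen_def)
  then have "?ev (mmonom \<alpha> ^ k) = 0"
    using ev_generator by (auto simp: coeff_id.meval_sum coeff_id.meval_mult intro!: sum.neutral)
  moreover have "?ev (mmonom \<alpha> ^ k) = 1"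
    by (simp add: coeff_id.meval_power mmonom_def mon_eval_def)
  ultimately show False by simp
qed


theorem proposition2p1:
  fixes n d N :: nat
  assumes "1 \<le> d" and "d \<le> n"
  shows "(n + d \<le> N \<and> \<not> CHAR('a::field) dvd (n choose d) \<longrightarrow>
           radical N (ideal_gen N (orbit_SN N (elem_sym n d :: 'a mpoly)))
             = ideal_gen N (orbit_SN N (\<Prod>i \<in> {1..d}. mvar i)))
       \<and> (n \<le> N \<and> CHAR('a) dvd (n choose d) \<longrightarrow>
           (\<forall>\<alpha>. Poly_Mapping.keys \<alpha> \<subseteq> {1..N} \<longrightarrow>
              mmonom \<alpha> \<notin> radical N (ideal_gen N (orbit_SN N (elem_sym n d :: 'a mpoly)))))"
  using radical_ideal_gen_elem_sym[OF assms] monomial_notin_radical_elem_sym by blast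

end
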